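(* Let $\omega$ be the Cartan connection on $P\to\mathbb R^3$ given by Theorem 3 for a nondegenerate pair of direction fields, and write its curvature as $\Omega_{12}=a\,\omega_{21}\wedge\omega_{31}$, $\Omega_{23}=d\,\omega_{31}\wedge\omega_{32}$, $\Omega_{13}=b\,\omega_{21}\wedge\omega_{31}+c\,\omega_{31}\wedge\omega_{32}$ (all other entries zero) with functions $a,b,c,d$ on $P$. Then $b=u_2^*a$ and $c=-u_1^*d$, where $u_1=E_{21}$, $u_2=E_{32}\in\mathfrak{sl}(3,\mathbb R)$ and $u^*$ denotes the vector field on $P$ with $\omega(u^* )=u$.
   Context: Theorem 3 (normal Cartan connection): with $\overline G=SL(3,\mathbb R)$ and $G$ its upper-triangular subgroup, for a nondegenerate pair of direction fields $(E_1,E_2)$ in $\mathbb R^3$ (i.e. $E_1\ne E_2$ pointwise and $E_1\oplus E_2$ not completely integrable) there is, unique up to isomorphism, a principal $G$-bundle $P\to\mathbb R^3$ with a Cartan connection $\omega=(\omega_{ij})$ (an $\mathfrak{sl}(3,\mathbb R)$-valued 1-form with $\omega(X^* )=X$ for $X\in\mathfrak g$, $R_g^*\omega=\mathrm{Ad}(g^{-1})\omega$, $\omega_p$ bijective) such that $E_1=\{s^*\omega_{21},s^*\omega_{31}\}^\perp$, $E_2=\{s^*\omega_{31},s^*\omega_{32}\}^\perp$ for local sections $s$, and whose curvature $\Omega=d\omega+\frac12[\omega,\omega]$ has the form $\begin{pmatrix}0&a\omega_{21}\wedge\omega_{31}&b\omega_{21}\wedge\omega_{31}+c\omega_{31}\wedge\omega_{32}\\0&0&d\omega_{31}\wedge\omega_{32}\\0&0&0\end{pmatrix}$.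 $E_{ij}$ denotes the matrix unit. *)

theory Defs
  imports "HOL-Analysis.Analysis"
begin

(* 3x3 real matrices; entry (i,j) is  A $ i $ j  with indices 1,2,3 of type 3
   (note: in type 3 the numeral 3 denotes the third element, which equals 0;
   the three indices 1,2,3 are pairwise distinct, so this is just a labelling). *)
type_synonym mat3 = "real^3^3"

(* Points of P = R^3 x G, embedded in the ambient space R^3 x R^(3x3). *)
type_synonym pt = "(real^3) \<times> (real^3^3)"

definition Emat :: "3 \<Rightarrow> 3 \<Rightarrow> mat3" where
  "Emat i j = (\<chi> k l. if k = i \<and> l = j then 1 else 0)"

definition sl3 :: "mat3 set" where
  "sl3 = {A. trace A = 0}"

definition upper3 :: "mat3 \<Rightarrow> bool" where
  "upper3 A \<longleftrightarrow> A $ 2 $ 1 = 0 \<and> A $ 3 $ 1 = 0 \<and> A $ 3 $ 2 = 0"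

definition Gset :: "mat3 set" where
  "Gset = {g. upper3 g \<and> det g = 1}"

definition gLie :: "mat3 set" where
  "gLie = {X. upper3 X \<and> trace X = 0}"

definition lie_br :: "mat3 \<Rightarrow> mat3 \<Rightarrow> mat3" where
  "lie_br A B = A ** B - B ** A"

definition Pset :: "pt set" where
  "Pset = UNIV \<times> Gset"

definition tangent :: "pt \<Rightarrow> pt set" where
  "tangent p = {(v, snd p ** Y) | v Y. Y \<in> gLie}"

fun iter_dd :: "('a::real_normed_vector \<Rightarrow> 'b::real_normed_vector) \<Rightarrow> 'a list \<Rightarrow> 'a \<Rightarrow> 'b" where
  "iter_dd f [] = f"
| "iter_dd f (v # vs) = (\<lambda>x. frechet_derivative (iter_dd f vs) (at x) v)"

definition smooth_on :: "'a::real_normed_vector set \<Rightarrow> ('a \<Rightarrow> 'b::real_normed_vector) \<Rightarrow> bool" where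
  "smooth_on U f \<longleftrightarrow> (\<forall>vs. \<forall>x\<in>U. iter_dd f vs differentiable (at x))"

definition vf_bracket :: "(real^3 \<Rightarrow> real^3) \<Rightarrow> (real^3 \<Rightarrow> real^3) \<Rightarrow> real^3 \<Rightarrow> real^3" where
  "vf_bracket X Y x = frechet_derivative Y (at x) (X x) - frechet_derivative X (at x) (Y x)"

definition direction_field :: "(real^3 \<Rightarrow> (real^3) set) \<Rightarrow> bool" where
  "direction_field E \<longleftrightarrow>
     (\<forall>x. \<exists>U e. open U \<and> x \<in> U \<and> smooth_on U e \<and>
        (\<forall>y\<in>U. e y \<noteq> 0 \<and> E y = span {e y}))"

definition nondegenerate_pair :: "(real^3 \<Rightarrow> (real^3) set) \<Rightarrow> (real^3 \<Rightarrow> (real^3) set) \<Rightarrow> bool" where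
  "nondegenerate_pair E1 E2 \<longleftrightarrow>
     direction_field E1 \<and> direction_field E2 \<and> (\<forall>x. E1 x \<noteq> E2 x) \<and>
     (\<forall>x U e1 e2. open U \<and> x \<in> U \<and> smooth_on U e1 \<and> smooth_on U e2 \<and>
        (\<forall>y\<in>U. E1 y = span {e1 y} \<and> E2 y = span {e2 y}) \<longrightarrow>
        vf_bracket e1 e2 x \<notin> span {e1 x, e2 x})"

(* A Cartan connection on P modelled on (SL(3,R), G).  omega p xi is the value of the
   sl(3)-valued 1-form at p on the tangent vector xi; omega is given as a smooth,
   fibrewise linear form on the ambient space, of which only the restriction to
   tangent vectors of P matters. *)
definition cartan_connection :: "(pt \<Rightarrow> pt \<Rightarrow> mat3) \<Rightarrow> bool" where
  "cartan_connection \<omega> \<longleftrightarrow>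
     (\<forall>p. linear (\<omega> p)) \<and>
     (\<forall>\<xi>. smooth_on UNIV (\<lambda>p. \<omega> p \<xi>)) \<and>
     (\<forall>p\<in>Pset. bij_betw (\<omega> p) (tangent p) sl3) \<and>
     (\<forall>x g X. g \<in> Gset \<and> X \<in> gLie \<longrightarrow> \<omega> (x, g) (0, g ** X) = X) \<and>
     (\<forall>x g h v Y. g \<in> Gset \<and> h \<in> Gset \<and> Y \<in> gLie \<longrightarrow>
        \<omega> (x, g ** h) (v, g ** Y ** h) = matrix_inv h ** \<omega> (x, g) (v, g ** Y) ** h)"

(* E1 = {s^*w21, s^*w31}^perp,  E2 = {s^*w31, s^*w32}^perp for local sections s(x) = (x, sigma x) *)
definition adapted :: "(pt \<Rightarrow> pt \<Rightarrow> mat3) \<Rightarrow> (real^3 \<Rightarrow> (real^3) set) \<Rightarrow> (real^3 \<Rightarrow> (real^3) set) \<Rightarrow> bool" where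
  "adapted \<omega> E1 E2 \<longleftrightarrow>
     (\<forall>V \<sigma>. open V \<and> smooth_on V \<sigma> \<and> (\<forall>x\<in>V. \<sigma> x \<in> Gset) \<longrightarrow>
       (\<forall>x\<in>V.
          E1 x = {v. \<omega> (x, \<sigma> x) (v, frechet_derivative \<sigma> (at x) v) $ 2 $ 1 = 0 \<and>
                     \<omega> (x, \<sigma> x) (v, frechet_derivative \<sigma> (at x) v) $ 3 $ 1 = 0} \<and>
          E2 x = {v. \<omega> (x, \<sigma> x) (v, frechet_derivative \<sigma> (at x) v) $ 3 $ 1 = 0 \<and>
                     \<omega> (x, \<sigma> x) (v, frechet_derivative \<sigma> (at x) v) $ 3 $ 2 = 0}))"

(* curvature Omega = d omega + 1/2 [omega, omega], evaluated on two (constant) vectors *)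
definition curv :: "(pt \<Rightarrow> pt \<Rightarrow> mat3) \<Rightarrow> pt \<Rightarrow> pt \<Rightarrow> pt \<Rightarrow> mat3" where
  "curv \<omega> p \<xi> \<eta> =
     frechet_derivative (\<lambda>q. \<omega> q \<eta>) (at p) \<xi> - frechet_derivative (\<lambda>q. \<omega> q \<xi>) (at p) \<eta>
     + lie_br (\<omega> p \<xi>) (\<omega> p \<eta>)"

definition wedge_ent :: "(pt \<Rightarrow> pt \<Rightarrow> mat3) \<Rightarrow> pt \<Rightarrow> 3 \<Rightarrow> 3 \<Rightarrow> 3 \<Rightarrow> 3 \<Rightarrow> pt \<Rightarrow> pt \<Rightarrow> real" where
  "wedge_ent \<omega> p i j k l \<xi> \<eta> =
     \<omega> p \<xi> $ i $ j * \<omega> p \<eta> $ k $ l - \<omega> p \<eta> $ i $ j * \<omega> p \<xi> $ k $ l"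

definition curvature_form :: "(pt \<Rightarrow> pt \<Rightarrow> mat3) \<Rightarrow> (pt \<Rightarrow> real) \<Rightarrow> (pt \<Rightarrow> real) \<Rightarrow> (pt \<Rightarrow> real) \<Rightarrow> (pt \<Rightarrow> real) \<Rightarrow> bool" where
  "curvature_form \<omega> a b c d \<longleftrightarrow>
     (\<forall>p\<in>Pset. \<forall>\<xi>\<in>tangent p. \<forall>\<eta>\<in>tangent p.
        curv \<omega> p \<xi> \<eta> =
          (\<chi> i j. if i = 1 \<and> j = 2 then a p * wedge_ent \<omega> p 2 1 3 1 \<xi> \<eta>
                  else if i = 1 \<and> j = 3 then b p * wedge_ent \<omega> p 2 1 3 1 \<xi> \<eta>
                                           + c p * wedge_ent \<omega> p 3 1 3 2 \<xi> \<eta>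
                  else if i = 2 \<and> j = 3 then d p * wedge_ent \<omega> p 3 1 3 2 \<xi> \<eta>
                  else 0))"

end

theory Submission
  imports Defs
begin

text \<open>Differentiating the curvature along the vector fields \<open>(v, g Y)\<close> of \<open>P\<close> gives the Bianchi
  identity \<open>d\<Omega> = [\<Omega>, \<omega>]\<close>: the second derivatives of \<open>\<omega>\<close> cancel by Schwarz's theorem, and the
  correction terms coming from brackets of these fields are curvature values on vertical vectors,
  which vanish for the normal form. Near a point where \<open>\<omega>\<^sub>2\<^sub>1 \<and> \<omega>\<^sub>3\<^sub>1\<close> does not vanish,
  \<open>a = \<Omega>\<^sub>1\<^sub>2 / (\<omega>\<^sub>2\<^sub>1 \<and> \<omega>\<^sub>3\<^sub>1)\<close> is differentiable. Evaluating the \<open>(1,2)\<close> entry of the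
  Bianchi identity on a frame dual to \<open>E\<^sub>2\<^sub>1, E\<^sub>3\<^sub>1, E\<^sub>3\<^sub>2\<close> leaves \<open>b = u\<^sub>2\<^sup>* a\<close>, because the
  remaining terms are lower-triangular entries of \<open>d\<omega>\<close>, which the structure equation expresses
  through \<open>[\<omega>, \<omega>]\<close> alone; the \<open>(2,3)\<close> entry gives \<open>c = -u\<^sub>1\<^sup>* d\<close> in the same way.\<close>

section \<open>Symmetry of second derivatives\<close>

lemma has_real_derivative_along_line:
  fixes f :: "'a::real_normed_vector \<Rightarrow> real"
  assumes "f differentiable at (a + s *\<^sub>R u)"
  shows "((\<lambda>t. f (a + t *\<^sub>R u)) has_real_derivative frechet_derivative f (at (a + s *\<^sub>R u)) u) (at s)"
proof -
  let ?f' = "frechet_derivative f (at (a + s *\<^sub>R u))"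
  have f': "(f has_derivative ?f') (at (a + s *\<^sub>R u))"
    using assms frechet_derivative_works by blast
  have "((\<lambda>t. a + t *\<^sub>R u) has_derivative (\<lambda>t. t *\<^sub>R u)) (at s)"
    by (auto intro!: derivative_eq_intros)
  from has_derivative_compose[OF this f']
  have "((\<lambda>t. f (a + t *\<^sub>R u)) has_derivative (\<lambda>t. ?f' (t *\<^sub>R u))) (at s)"
    by (simp add: o_def)
  moreover have "(\<lambda>t. ?f' (t *\<^sub>R u)) = (*) (?f' u)"
    using linear_scale[OF has_derivative_linear[OF f']] by (auto simp: fun_eq_iff)
  ultimately show ?thesis
    unfolding has_field_derivative_def by simp
qed

lemma second_difference_mean_value:
  fixes f :: "'a::real_normed_vector \<Rightarrow> real"
  assumes f: "\<And>x. f differentiable at x"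
    and fu: "\<And>x. (\<lambda>y. frechet_derivative f (at y) u) differentiable at x"
    and h: "h > 0"
  obtains z where "norm (z - p) \<le> h * (norm u + norm v)"
    and "f (p + h *\<^sub>R u + h *\<^sub>R v) - f (p + h *\<^sub>R u) - f (p + h *\<^sub>R v) + f p
      = h\<^sup>2 * frechet_derivative (\<lambda>y. frechet_derivative f (at y) u) (at z) v"
proof -
  define g where "g = (\<lambda>y. frechet_derivative f (at y) u)"
  define \<psi> where "\<psi> = (\<lambda>s. f ((p + h *\<^sub>R v) + s *\<^sub>R u) - f (p + s *\<^sub>R u))"
  have "\<exists>\<sigma>. 0 < \<sigma> \<and> \<sigma> < h \<and> \<psi> h - \<psi> 0 = (h - 0) * (g ((p + h *\<^sub>R v) + \<sigma> *\<^sub>R u) - g (p + \<sigma> *\<^sub>R u))"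
    unfolding \<psi>_def g_def by (intro MVT2[OF h] DERIV_diff has_real_derivative_along_line f)
  then obtain \<sigma> where \<sigma>: "0 < \<sigma>" "\<sigma> < h"
    and \<psi>: "\<psi> h - \<psi> 0 = h * (g ((p + h *\<^sub>R v) + \<sigma> *\<^sub>R u) - g (p + \<sigma> *\<^sub>R u))"
    by auto
  define \<phi> where "\<phi> = (\<lambda>t. g ((p + \<sigma> *\<^sub>R u) + t *\<^sub>R v))"
  have "\<exists>\<tau>. 0 < \<tau> \<and> \<tau> < h \<and> \<phi> h - \<phi> 0 = (h - 0) * frechet_derivative g (at ((p + \<sigma> *\<^sub>R u) + \<tau> *\<^sub>R v)) v"
    unfolding \<phi>_def by (intro MVT2[OF h] has_real_derivative_along_line) (simp add: g_def fu)
  then obtain \<tau> where \<tau>: "0 < \<tau>" "\<tau> < h"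
    and \<phi>: "\<phi> h - \<phi> 0 = h * frechet_derivative g (at ((p + \<sigma> *\<^sub>R u) + \<tau> *\<^sub>R v)) v"
    by auto
  have "norm (\<sigma> *\<^sub>R u + \<tau> *\<^sub>R v) \<le> \<sigma> * norm u + \<tau> * norm v"
    using \<sigma> \<tau> by (smt (verit) norm_scaleR norm_triangle_ineq)
  also have "\<dots> \<le> h * (norm u + norm v)"
    using \<sigma> \<tau> by (simp add: distrib_left add_mono mult_right_mono)
  finally have "norm (((p + \<sigma> *\<^sub>R u) + \<tau> *\<^sub>R v) - p) \<le> h * (norm u + norm v)"
    by (simp add: add.assoc)
  moreover have "f (p + h *\<^sub>R u + h *\<^sub>R v) - f (p + h *\<^sub>R u) - f (p + h *\<^sub>R v) + f p = h * (\<phi> h - \<phi> 0)"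
    using \<psi> unfolding \<psi>_def \<phi>_def by (simp add: algebra_simps)
  ultimately show ?thesis
    using that[of "(p + \<sigma> *\<^sub>R u) + \<tau> *\<^sub>R v"] \<phi> unfolding g_def by (simp add: power2_eq_square)
qed

text \<open>Schwarz's theorem: both mixed derivatives are values of the same second difference quotient
  at points near \<open>p\<close>, so continuity at \<open>p\<close> forces them to agree.\<close>
lemma mixed_directional_derivatives_eq:
  fixes f :: "'a::real_normed_vector \<Rightarrow> real"
  assumes f: "\<And>x. f differentiable at x"
    and fu: "\<And>x. (\<lambda>y. frechet_derivative f (at y) u) differentiable at x"
    and fv: "\<And>x. (\<lambda>y. frechet_derivative f (at y) v) differentiable at x"
    and cont_uv: "isCont (\<lambda>x. frechet_derivative (\<lambda>y. frechet_derivative f (at y) u) (at x) v) p"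
    and cont_vu: "isCont (\<lambda>x. frechet_derivative (\<lambda>y. frechet_derivative f (at y) v) (at x) u) p"
  shows "frechet_derivative (\<lambda>y. frechet_derivative f (at y) u) (at p) v
       = frechet_derivative (\<lambda>y. frechet_derivative f (at y) v) (at p) u"
proof (rule ccontr)
  define A where "A = (\<lambda>x. frechet_derivative (\<lambda>y. frechet_derivative f (at y) u) (at x) v)"
  define B where "B = (\<lambda>x. frechet_derivative (\<lambda>y. frechet_derivative f (at y) v) (at x) u)"
  assume "\<not> ?thesis"
  then have e: "\<bar>A p - B p\<bar> / 2 > 0" unfolding A_def B_def by simp
  obtain d1 where d1: "d1 > 0" "\<And>x. dist x p < d1 \<Longrightarrow> dist (A x) (A p) < \<bar>A p - B p\<bar> / 2"
    using cont_uv e unfolding continuous_at_eps_delta A_def by blast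
  obtain d2 where d2: "d2 > 0" "\<And>x. dist x p < d2 \<Longrightarrow> dist (B x) (B p) < \<bar>A p - B p\<bar> / 2"
    using cont_vu e unfolding continuous_at_eps_delta B_def by blast
  define h where "h = min d1 d2 / (2 * (norm u + norm v + 1))"
  have pos: "0 < 2 * (norm u + norm v + 1)" by (smt (verit) norm_ge_zero)
  have h: "h > 0" using d1 d2 pos unfolding h_def by simp
  have small: "h * (norm u + norm v) < min d1 d2"
  proof -
    have "h * (norm u + norm v) \<le> h * (norm u + norm v + 1)" using h by simp
    also have "\<dots> = min d1 d2 / 2" unfolding h_def using pos by (simp add: field_simps)
    finally show ?thesis using d1 d2 by linarith
  qed
  obtain z where z_near: "norm (z - p) \<le> h * (norm u + norm v)"
    and z: "f (p + h *\<^sub>R u + h *\<^sub>R v) - f (p + h *\<^sub>R u) - f (p + h *\<^sub>R v) + f p = h\<^sup>2 * A z"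
    using second_difference_mean_value[OF f fu h] unfolding A_def by blast
  obtain w where w_near: "norm (w - p) \<le> h * (norm u + norm v)"
    and w: "f (p + h *\<^sub>R v + h *\<^sub>R u) - f (p + h *\<^sub>R v) - f (p + h *\<^sub>R u) + f p = h\<^sup>2 * B w"
    using second_difference_mean_value[OF f fv h, of p u] unfolding B_def by (auto simp: add.commute)
  have "dist (A z) (A p) < \<bar>A p - B p\<bar> / 2"
    using z_near small by (intro d1(2)) (simp add: dist_norm)
  moreover have "dist (B w) (B p) < \<bar>A p - B p\<bar> / 2"
    using w_near small by (intro d2(2)) (simp add: dist_norm)
  moreover have "A z = B w"
    using z w h by (simp add: algebra_simps)
  ultimately show False by (simp add: dist_real_def abs_if split: if_splits)
qed

section \<open>Derivatives of matrix-valued expressions\<close>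

lemma has_derivative_linear_family_apply:
  fixes G :: "'a::real_normed_vector \<Rightarrow> 'c::euclidean_space \<Rightarrow> 'b::real_normed_vector"
  assumes lin: "\<And>q. linear (G q)" and G: "\<And>e. (\<lambda>q. G q e) differentiable at p"
    and u: "(u has_derivative u') (at p)"
  shows "((\<lambda>q. G q (u q)) has_derivative
           (\<lambda>\<zeta>. frechet_derivative (\<lambda>q. G q (u p)) (at p) \<zeta> + G p (u' \<zeta>))) (at p)"
proof -
  define DG where "DG = (\<lambda>b. frechet_derivative (\<lambda>q. G q b) (at p))"
  have DG: "((\<lambda>q. G q b) has_derivative DG b) (at p)" for b
    using G frechet_derivative_works unfolding DG_def by blast
  have expand: "G q w = (\<Sum>b\<in>Basis. (w \<bullet> b) *\<^sub>R G q b)" for q w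
  proof -
    have "G q w = G q (\<Sum>b\<in>Basis. (w \<bullet> b) *\<^sub>R b)" by (simp add: euclidean_representation)
    then show ?thesis using lin by (simp add: linear_sum linear_scale)
  qed
  have "((\<lambda>q. \<Sum>b\<in>Basis. (u q \<bullet> b) *\<^sub>R G q b) has_derivative
      (\<lambda>\<zeta>. \<Sum>b\<in>Basis. (u p \<bullet> b) *\<^sub>R DG b \<zeta> + (u' \<zeta> \<bullet> b) *\<^sub>R G p b)) (at p)"
    by (intro has_derivative_sum has_derivative_scaleR has_derivative_inner_left u DG)
  moreover have const_dir: "((\<lambda>q. \<Sum>b\<in>Basis. (u p \<bullet> b) *\<^sub>R G q b) has_derivative
      (\<lambda>\<zeta>. \<Sum>b\<in>Basis. (u p \<bullet> b) *\<^sub>R DG b \<zeta> + 0 *\<^sub>R G p b)) (at p)"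
    by (intro has_derivative_sum has_derivative_scaleR has_derivative_const DG)
  have "frechet_derivative (\<lambda>q. G q (u p)) (at p) = (\<lambda>\<zeta>. \<Sum>b\<in>Basis. (u p \<bullet> b) *\<^sub>R DG b \<zeta>)"
    using frechet_derivative_at[OF const_dir] by (simp add: expand[of _ "u p"])
  ultimately show ?thesis
    by (simp add: sum.distrib expand[symmetric])
qed

lemma has_derivative_matrix_entry:
  fixes F :: "'a::real_normed_vector \<Rightarrow> real^'n^'m"
  assumes "(F has_derivative F') (at p)"
  shows "((\<lambda>q. F q $ i $ j) has_derivative (\<lambda>\<zeta>. F' \<zeta> $ i $ j)) (at p)"
  using bounded_linear.has_derivative[OF bounded_linear_compose[OF bounded_linear_vec_nth bounded_linear_vec_nth] assms]
  by simp

lemma frechet_derivative_matrix_entry: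
  fixes F :: "'a::real_normed_vector \<Rightarrow> real^'n^'m"
  assumes "F differentiable at p"
  shows "(\<lambda>q. F q $ i $ j) differentiable at p"
    and "frechet_derivative (\<lambda>q. F q $ i $ j) (at p) = (\<lambda>\<zeta>. frechet_derivative F (at p) \<zeta> $ i $ j)"
  using has_derivative_matrix_entry[OF assms[unfolded frechet_derivative_works]]
  by (auto simp: differentiable_def frechet_derivative_at[symmetric])

lemma matrix_mult_distribs:
  fixes A B C :: mat3
  shows "(A + B) ** C = A ** C + B ** C" "A ** (B + C) = A ** B + A ** C"
    "(A - B) ** C = A ** C - B ** C" "A ** (B - C) = A ** B - A ** C"
    "(- A) ** C = - (A ** C)" "A ** (- C) = - (A ** C)"
  by (simp_all add: matrix_matrix_mult_def vec_eq_iff sum_3 algebra_simps)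

lemma bounded_bilinear_matrix_mult: "bounded_bilinear (\<lambda>A B::mat3. A ** B)"
proof -
  have "bilinear (\<lambda>A B::mat3. A ** B)"
    unfolding bilinear_def
    by (auto intro!: linearI simp: matrix_matrix_mult_def vec_eq_iff sum_3 algebra_simps)
  then show ?thesis using bilinear_conv_bounded_bilinear by blast
qed

lemma has_derivative_lie_br:
  assumes "(A has_derivative A') (at p)" "(B has_derivative B') (at p)"
  shows "((\<lambda>q. lie_br (A q) (B q)) has_derivative
           (\<lambda>\<zeta>. lie_br (A' \<zeta>) (B p) + lie_br (A p) (B' \<zeta>))) (at p)"
proof -
  have "((\<lambda>q. A q ** B q - B q ** A q) has_derivative
      (\<lambda>\<zeta>. (A p ** B' \<zeta> + A' \<zeta> ** B p) - (B p ** A' \<zeta> + B' \<zeta> ** A p))) (at p)"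
    by (intro has_derivative_diff bounded_bilinear.FDERIV[OF bounded_bilinear_matrix_mult] assms)
  then show ?thesis unfolding lie_br_def by (simp add: algebra_simps)
qed

section \<open>The group \<open>G\<close> and the bundle \<open>P\<close>\<close>

lemma upper3_mult: "upper3 A \<Longrightarrow> upper3 B \<Longrightarrow> upper3 (A ** B)"
  unfolding upper3_def matrix_matrix_mult_def by (simp add: sum_3)

lemma det_upper3: "upper3 A \<Longrightarrow> det A = A$1$1 * A$2$2 * A$3$3"
  unfolding upper3_def by (simp add: det_3)

lemma lie_br_gLie: "A \<in> gLie \<Longrightarrow> B \<in> gLie \<Longrightarrow> lie_br A B \<in> gLie"
  unfolding gLie_def upper3_def lie_br_def
  by (simp add: trace_def sum_3 matrix_matrix_mult_def algebra_simps)

lemma gLie_lower_entries: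
  "X \<in> gLie \<Longrightarrow> X $ 2 $ 1 = 0 \<and> X $ 3 $ 1 = 0 \<and> X $ 3 $ 2 = 0"
  unfolding gLie_def upper3_def by blast

lemma Emat_sl3: "i \<noteq> j \<Longrightarrow> Emat i j \<in> sl3"
  unfolding sl3_def Emat_def trace_def by (auto intro!: sum.neutral)

definition lfield :: "real^3 \<Rightarrow> mat3 \<Rightarrow> pt \<Rightarrow> pt" where
  "lfield v Y q = (v, snd q ** Y)"

lemma tangent_iff_lfield: "\<xi> \<in> tangent q \<longleftrightarrow> (\<exists>v Y. Y \<in> gLie \<and> \<xi> = lfield v Y q)"
  unfolding tangent_def lfield_def by auto

lemma lfield_tangent: "Y \<in> gLie \<Longrightarrow> lfield v Y q \<in> tangent q"
  using tangent_iff_lfield by blast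

lemma has_derivative_lfield: "(lfield v Y has_derivative lfield 0 Y) (at p)"
  unfolding lfield_def
  by (intro has_derivative_Pair has_derivative_const
      bounded_linear.has_derivative[OF bounded_bilinear.bounded_linear_left[OF bounded_bilinear_matrix_mult]]
      has_derivative_snd has_derivative_ident)

lemma lfield_bracket:
  "lfield 0 Yi (lfield vk Yk p) - lfield 0 Yk (lfield vi Yi p) = lfield 0 (lie_br Yk Yi) p"
  unfolding lfield_def lie_br_def by (simp add: matrix_mult_distribs matrix_mul_assoc)

lemma Gset_mult: "g \<in> Gset \<Longrightarrow> h \<in> Gset \<Longrightarrow> g ** h \<in> Gset"
  unfolding Gset_def by (simp add: upper3_mult det_mul)

text \<open>Correction of the \<open>(3,3)\<close> entry that puts \<open>1 + t Y\<close> back into \<open>det = 1\<close>; it vanishes to first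
  order because \<open>trace Y = 0\<close>.\<close>
definition det_correction :: "mat3 \<Rightarrow> real \<Rightarrow> real" where
  "det_correction Y t = 1 / ((1 + t * Y$1$1) * (1 + t * Y$2$2)) - 1 - t * Y$3$3"

lemma det_corrected_Gset:
  assumes Y: "Y \<in> gLie" and t: "0 < 1 + t * Y$1$1" "0 < 1 + t * Y$2$2"
  shows "mat 1 + t *\<^sub>R Y + det_correction Y t *\<^sub>R Emat 3 3 \<in> Gset"
proof -
  define M where "M = mat 1 + t *\<^sub>R Y + det_correction Y t *\<^sub>R Emat 3 3"
  have "upper3 M" using Y unfolding M_def upper3_def gLie_def Emat_def by (simp add: mat_def)
  moreover have "M$1$1 = 1 + t * Y$1$1" "M$2$2 = 1 + t * Y$2$2"
    "M$3$3 = 1 / ((1 + t * Y$1$1) * (1 + t * Y$2$2))"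
    unfolding M_def det_correction_def Emat_def by (simp_all add: mat_def)
  ultimately show ?thesis
    using t det_upper3 unfolding M_def[symmetric] Gset_def by simp
qed

lemma has_real_derivative_det_correction:
  assumes "Y \<in> gLie"
  shows "(det_correction Y has_real_derivative 0) (at 0)"
proof -
  have "(det_correction Y has_real_derivative (- ((Y$1$1 * 1 + 1 * Y$2$2) / 1) - Y$3$3)) (at 0)"
    unfolding det_correction_def by (rule derivative_eq_intros refl | simp)+
  moreover have "- ((Y$1$1 * 1 + 1 * Y$2$2) / 1) - Y$3$3 = 0"
    using assms unfolding gLie_def by (simp add: trace_def sum_3 algebra_simps)
  ultimately show ?thesis by simp
qed

lemma tangent_curve:
  assumes p: "p \<in> Pset" and \<xi>: "\<xi> \<in> tangent p"
  obtains \<gamma> where "(\<gamma> has_vector_derivative \<xi>) (at 0)" "\<gamma> 0 = p" "\<forall>\<^sub>F t in nhds 0. \<gamma> t \<in> Pset"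
proof -
  obtain x0 g where pg: "p = (x0, g)" and g: "g \<in> Gset" using p unfolding Pset_def by auto
  obtain v Y where \<xi>_eq: "\<xi> = (v, g ** Y)" and Y: "Y \<in> gLie"
    using \<xi> pg unfolding tangent_def by auto
  define \<gamma> where "\<gamma> = (\<lambda>t. p + t *\<^sub>R \<xi> + det_correction Y t *\<^sub>R (0, g ** Emat 3 3))"
  have "(\<gamma> has_vector_derivative (0 + (0 *\<^sub>R 0 + 1 *\<^sub>R \<xi>) + (det_correction Y 0 *\<^sub>R 0 + 0 *\<^sub>R (0, g ** Emat 3 3)))) (at 0)"
    unfolding \<gamma>_def
    by (intro has_vector_derivative_add has_vector_derivative_const has_vector_derivative_scaleR
        DERIV_ident has_real_derivative_det_correction Y)
  then have \<gamma>': "(\<gamma> has_vector_derivative \<xi>) (at 0)" by (simp flip: zero_prod_def)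
  have "\<forall>\<^sub>F t in nhds 0. 0 < 1 + t * c" for c :: real
  proof (rule order_tendstoD)
    show "((\<lambda>t. 1 + t * c) \<longlongrightarrow> 1 + 0 * c) (nhds 0)"
      by (intro tendsto_intros filterlim_ident)
  qed simp
  then have "\<forall>\<^sub>F t in nhds 0. 0 < 1 + t * Y$1$1 \<and> 0 < 1 + t * Y$2$2"
    by (intro eventually_conj)
  moreover have "\<gamma> t = (x0 + t *\<^sub>R v, g ** (mat 1 + t *\<^sub>R Y + det_correction Y t *\<^sub>R Emat 3 3))" for t
    unfolding \<gamma>_def pg \<xi>_eq by (simp add: matrix_add_ldistrib matrix_scalar_ac scalar_matrix_assoc)
  ultimately have "\<forall>\<^sub>F t in nhds 0. \<gamma> t \<in> Pset"
    using g Y by (auto simp: Pset_def intro!: Gset_mult det_corrected_Gset elim!: eventually_mono)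
  moreover have "\<gamma> 0 = p" unfolding \<gamma>_def det_correction_def by (simp flip: zero_prod_def)
  ultimately show ?thesis using that \<gamma>' by blast
qed

lemma frechet_derivative_tangent_eq_0:
  fixes f :: "pt \<Rightarrow> real"
  assumes f: "f differentiable at p" and p: "p \<in> Pset" and \<xi>: "\<xi> \<in> tangent p"
    and vanish: "\<forall>\<^sub>F q in nhds p. q \<in> Pset \<longrightarrow> f q = 0"
  shows "frechet_derivative f (at p) \<xi> = 0"
proof -
  obtain \<gamma> where \<gamma>': "(\<gamma> has_vector_derivative \<xi>) (at 0)" and \<gamma>0: "\<gamma> 0 = p"
    and in_P: "\<forall>\<^sub>F t in nhds 0. \<gamma> t \<in> Pset"
    using tangent_curve[OF p \<xi>] by blast
  have "(\<gamma> \<longlongrightarrow> p) (nhds 0)"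
    using has_vector_derivative_continuous[OF \<gamma>'] \<gamma>0 tendsto_at_iff_tendsto_nhds isCont_def by metis
  then have "\<forall>\<^sub>F t in nhds 0. f (\<gamma> t) = 0"
    using vanish in_P by (auto simp: filterlim_iff elim: eventually_mono eventually_elim2)
  then have "((\<lambda>t. f (\<gamma> t)) has_real_derivative 0) (at 0)"
    by (rule DERIV_cong_ev[THEN iffD2, OF refl _ refl, of _ "\<lambda>_. 0"]) auto
  moreover have "((\<lambda>t. f (\<gamma> t)) has_real_derivative frechet_derivative f (at p) \<xi>) (at 0)"
  proof -
    have f': "(f has_derivative frechet_derivative f (at p)) (at (\<gamma> 0))"
      using f \<gamma>0 frechet_derivative_works by metis
    have "((\<lambda>t. f (\<gamma> t)) has_derivative (\<lambda>t. frechet_derivative f (at p) (t *\<^sub>R \<xi>))) (at 0)"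
      using has_derivative_compose[OF \<gamma>'[unfolded has_vector_derivative_def] f'] by (simp add: o_def)
    moreover have "(\<lambda>t. frechet_derivative f (at p) (t *\<^sub>R \<xi>)) = (*) (frechet_derivative f (at p) \<xi>)"
      using linear_scale[OF has_derivative_linear[OF f']] by (auto simp: fun_eq_iff)
    ultimately show ?thesis unfolding has_field_derivative_def by simp
  qed
  ultimately show ?thesis using DERIV_unique by blast
qed

section \<open>Cartan connections and the Bianchi identity\<close>

locale cartan =
  fixes \<omega> :: "pt \<Rightarrow> pt \<Rightarrow> mat3"
  assumes connection: "cartan_connection \<omega>"
begin

definition dform :: "pt \<Rightarrow> pt \<Rightarrow> pt \<Rightarrow> mat3" where
  "dform q \<eta> \<zeta> = frechet_derivative (\<lambda>r. \<omega> r \<eta>) (at q) \<zeta>"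

definition ddform :: "pt \<Rightarrow> pt \<Rightarrow> pt \<Rightarrow> pt \<Rightarrow> mat3" where
  "ddform q \<eta> \<zeta> \<theta> = frechet_derivative (\<lambda>r. dform r \<eta> \<zeta>) (at q) \<theta>"

lemma linear_form: "linear (\<omega> q)"
  using connection unfolding cartan_connection_def by blast

lemma differentiable_iter_dd_form: "iter_dd (\<lambda>q. \<omega> q \<eta>) vs differentiable at x"
  using connection unfolding cartan_connection_def smooth_on_def by blast

lemma differentiable_form: "(\<lambda>q. \<omega> q \<eta>) differentiable at x"
  using differentiable_iter_dd_form[of \<eta> "[]"] by simp

lemma differentiable_dform: "(\<lambda>q. dform q \<eta> \<zeta>) differentiable at x"
  using differentiable_iter_dd_form[of \<eta> "[\<zeta>]"] unfolding dform_def by simp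

lemma differentiable_ddform: "(\<lambda>q. ddform q \<eta> \<zeta> \<theta>) differentiable at x"
  using differentiable_iter_dd_form[of \<eta> "[\<theta>, \<zeta>]"] unfolding dform_def ddform_def by simp

lemma has_derivative_form: "((\<lambda>q. \<omega> q \<eta>) has_derivative dform x \<eta>) (at x)"
  using differentiable_form frechet_derivative_works unfolding dform_def by blast

lemma linear_dform: "linear (dform q \<eta>)"
  using has_derivative_form has_derivative_linear by blast

lemma linear_dform_arg: "linear (\<lambda>\<eta>. dform q \<eta> \<zeta>)"
proof (rule linearI)
  fix \<eta>1 \<eta>2
  have "((\<lambda>r. \<omega> r (\<eta>1 + \<eta>2)) has_derivative (\<lambda>z. dform q \<eta>1 z + dform q \<eta>2 z)) (at q)"
    unfolding linear_add[OF linear_form] by (intro has_derivative_add has_derivative_form)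
  then show "dform q (\<eta>1 + \<eta>2) \<zeta> = dform q \<eta>1 \<zeta> + dform q \<eta>2 \<zeta>"
    unfolding dform_def by (simp add: frechet_derivative_at[symmetric])
next
  fix c :: real and \<eta>
  have "((\<lambda>r. \<omega> r (c *\<^sub>R \<eta>)) has_derivative (\<lambda>z. c *\<^sub>R dform q \<eta> z)) (at q)"
    unfolding linear_scale[OF linear_form] by (intro has_derivative_scaleR_right has_derivative_form)
  then show "dform q (c *\<^sub>R \<eta>) \<zeta> = c *\<^sub>R dform q \<eta> \<zeta>"
    unfolding dform_def by (simp add: frechet_derivative_at[symmetric])
qed

lemma ddform_commute: "ddform p \<eta> \<zeta> \<theta> = ddform p \<eta> \<theta> \<zeta>"
proof -
  have "ddform p \<eta> \<zeta> \<theta> $ i $ j = ddform p \<eta> \<theta> \<zeta> $ i $ j" for i j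
  proof -
    define f where "f = (\<lambda>q. \<omega> q \<eta> $ i $ j)"
    have Df: "frechet_derivative f (at y) u = dform y \<eta> u $ i $ j" for y u
      unfolding f_def dform_def frechet_derivative_matrix_entry(2)[OF differentiable_form] ..
    have DDf: "frechet_derivative (\<lambda>y. frechet_derivative f (at y) u) (at x) w = ddform x \<eta> u w $ i $ j"
      for x u w
      unfolding Df ddform_def frechet_derivative_matrix_entry(2)[OF differentiable_dform] ..
    have f_diff: "f differentiable at x" for x
      unfolding f_def by (rule frechet_derivative_matrix_entry(1)[OF differentiable_form])
    have Df_diff: "(\<lambda>y. frechet_derivative f (at y) u) differentiable at x" for x u
      unfolding Df by (rule frechet_derivative_matrix_entry(1)[OF differentiable_dform])
    have cont: "isCont (\<lambda>x. frechet_derivative (\<lambda>y. frechet_derivative f (at y) u) (at x) w) p" for u w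
      unfolding DDf
      by (intro differentiable_imp_continuous_within frechet_derivative_matrix_entry(1) differentiable_ddform)
    have "frechet_derivative (\<lambda>y. frechet_derivative f (at y) \<zeta>) (at p) \<theta>
        = frechet_derivative (\<lambda>y. frechet_derivative f (at y) \<theta>) (at p) \<zeta>"
      using mixed_directional_derivatives_eq[OF f_diff Df_diff Df_diff cont cont] .
    then show ?thesis unfolding DDf .
  qed
  then show ?thesis unfolding vec_eq_iff by blast
qed

lemma has_derivative_form_apply:
  assumes "(u has_derivative u') (at p)"
  shows "((\<lambda>q. \<omega> q (u q)) has_derivative (\<lambda>\<zeta>. dform p (u p) \<zeta> + \<omega> p (u' \<zeta>))) (at p)"
  using has_derivative_linear_family_apply[OF linear_form differentiable_form assms]
  unfolding dform_def .

lemma has_derivative_dform_apply: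
  assumes u: "(u has_derivative u') (at p)" and v: "(v has_derivative v') (at p)"
  shows "((\<lambda>q. dform q (v q) (u q)) has_derivative
     (\<lambda>\<zeta>. ddform p (v p) (u p) \<zeta> + dform p (v p) (u' \<zeta>) + dform p (v' \<zeta>) (u p))) (at p)"
proof -
  have inner: "((\<lambda>q. dform q \<eta> (u q)) has_derivative (\<lambda>\<zeta>. ddform p \<eta> (u p) \<zeta> + dform p \<eta> (u' \<zeta>))) (at p)" for \<eta>
    using has_derivative_linear_family_apply[OF linear_dform differentiable_dform u]
    unfolding ddform_def .
  have "((\<lambda>q. dform q (v q) (u q)) has_derivative
     (\<lambda>\<zeta>. frechet_derivative (\<lambda>q. dform q (v p) (u q)) (at p) \<zeta> + dform p (v' \<zeta>) (u p))) (at p)"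
    using inner
    by (intro has_derivative_linear_family_apply[where G = "\<lambda>q \<eta>. dform q \<eta> (u q)", OF linear_dform_arg _ v])
      (auto simp: differentiable_def)
  then show ?thesis
    by (simp add: frechet_derivative_at[OF inner, symmetric])
qed

definition field_deriv :: "pt \<Rightarrow> real^3 \<Rightarrow> mat3 \<Rightarrow> pt \<Rightarrow> mat3" where
  "field_deriv p v Y \<zeta> = dform p (lfield v Y p) \<zeta> + \<omega> p (lfield 0 Y \<zeta>)"

lemma has_derivative_form_lfield:
  "((\<lambda>q. \<omega> q (lfield v Y q)) has_derivative field_deriv p v Y) (at p)"
  unfolding field_deriv_def by (rule has_derivative_form_apply[OF has_derivative_lfield])

lemma curv_eq: "curv \<omega> q \<xi> \<eta> = dform q \<eta> \<xi> - dform q \<xi> \<eta> + lie_br (\<omega> q \<xi>) (\<omega> q \<eta>)"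
  unfolding curv_def dform_def ..

lemma curv_diff_left: "curv \<omega> p (\<alpha> - \<beta>) \<eta> = curv \<omega> p \<alpha> \<eta> - curv \<omega> p \<beta> \<eta>"
proof -
  have diffs: "dform p \<eta> (\<alpha> - \<beta>) = dform p \<eta> \<alpha> - dform p \<eta> \<beta>"
    "dform p (\<alpha> - \<beta>) \<eta> = dform p \<alpha> \<eta> - dform p \<beta> \<eta>"
    "\<omega> p (\<alpha> - \<beta>) = \<omega> p \<alpha> - \<omega> p \<beta>"
    using linear_diff[OF linear_dform] linear_diff[OF linear_dform_arg] linear_diff[OF linear_form]
    by blast+
  show ?thesis
    unfolding curv_eq lie_br_def diffs by (simp add: matrix_mult_distribs algebra_simps)
qed

text \<open>The structure equation \<open>\<Omega>(X, Y) = X \<omega>(Y) - Y \<omega>(X) - \<omega>([X, Y]) + [\<omega>(X), \<omega>(Y)]\<close>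
  for the fields \<open>lfield\<close>, whose bracket is the vertical field of the commutator.\<close>
lemma structure_equation:
  "field_deriv p vi Yi (lfield vk Yk p) - field_deriv p vk Yk (lfield vi Yi p)
   = curv \<omega> p (lfield vk Yk p) (lfield vi Yi p) - lie_br (\<omega> p (lfield vk Yk p)) (\<omega> p (lfield vi Yi p))
     + \<omega> p (lfield 0 (lie_br Yk Yi) p)"
  using linear_diff[OF linear_form, of p "lfield 0 Yi (lfield vk Yk p)" "lfield 0 Yk (lfield vi Yi p)"]
  unfolding field_deriv_def curv_eq lfield_bracket by (simp add: algebra_simps)

definition curv_deriv :: "pt \<Rightarrow> real^3 \<Rightarrow> mat3 \<Rightarrow> real^3 \<Rightarrow> mat3 \<Rightarrow> pt \<Rightarrow> mat3" where
  "curv_deriv p vi Yi vj Yj \<zeta> =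
     (ddform p (lfield vj Yj p) (lfield vi Yi p) \<zeta> + dform p (lfield vj Yj p) (lfield 0 Yi \<zeta>)
        + dform p (lfield 0 Yj \<zeta>) (lfield vi Yi p))
   - (ddform p (lfield vi Yi p) (lfield vj Yj p) \<zeta> + dform p (lfield vi Yi p) (lfield 0 Yj \<zeta>)
        + dform p (lfield 0 Yi \<zeta>) (lfield vj Yj p))
   + (lie_br (field_deriv p vi Yi \<zeta>) (\<omega> p (lfield vj Yj p))
        + lie_br (\<omega> p (lfield vi Yi p)) (field_deriv p vj Yj \<zeta>))"

lemma has_derivative_curv_lfield:
  "((\<lambda>q. curv \<omega> q (lfield vi Yi q) (lfield vj Yj q)) has_derivative curv_deriv p vi Yi vj Yj) (at p)"
  unfolding curv_eq curv_deriv_def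
  by (intro has_derivative_add has_derivative_diff has_derivative_dform_apply has_derivative_lfield
      has_derivative_lie_br has_derivative_form_lfield)

text \<open>The second derivatives of \<open>\<omega>\<close> cancel by Schwarz's theorem; the last three terms come from
  the brackets of the fields.\<close>
lemma curv_deriv_cyclic:
  fixes p v1 v2 v3 Y1 Y2 Y3
  defines "\<xi>1 \<equiv> lfield v1 Y1 p" and "\<xi>2 \<equiv> lfield v2 Y2 p" and "\<xi>3 \<equiv> lfield v3 Y3 p"
  shows "curv_deriv p v1 Y1 v2 Y2 \<xi>3 + curv_deriv p v2 Y2 v3 Y3 \<xi>1 + curv_deriv p v3 Y3 v1 Y1 \<xi>2
   = lie_br (curv \<omega> p \<xi>1 \<xi>2) (\<omega> p \<xi>3) + lie_br (curv \<omega> p \<xi>2 \<xi>3) (\<omega> p \<xi>1)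
     + lie_br (curv \<omega> p \<xi>3 \<xi>1) (\<omega> p \<xi>2)
     + curv \<omega> p (lfield 0 (lie_br Y3 Y1) p) \<xi>2 + curv \<omega> p (lfield 0 (lie_br Y1 Y2) p) \<xi>3
     + curv \<omega> p (lfield 0 (lie_br Y2 Y3) p) \<xi>1"
proof -
  have "curv_deriv p v1 Y1 v2 Y2 \<xi>3 + curv_deriv p v2 Y2 v3 Y3 \<xi>1 + curv_deriv p v3 Y3 v1 Y1 \<xi>2
   = lie_br (curv \<omega> p \<xi>1 \<xi>2) (\<omega> p \<xi>3) + lie_br (curv \<omega> p \<xi>2 \<xi>3) (\<omega> p \<xi>1)
     + lie_br (curv \<omega> p \<xi>3 \<xi>1) (\<omega> p \<xi>2)
     + (curv \<omega> p (lfield 0 Y1 \<xi>3) \<xi>2 - curv \<omega> p (lfield 0 Y3 \<xi>1) \<xi>2)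
     + (curv \<omega> p (lfield 0 Y2 \<xi>1) \<xi>3 - curv \<omega> p (lfield 0 Y1 \<xi>2) \<xi>3)
     + (curv \<omega> p (lfield 0 Y3 \<xi>2) \<xi>1 - curv \<omega> p (lfield 0 Y2 \<xi>3) \<xi>1)"
    using ddform_commute[of p \<xi>2 \<xi>1 \<xi>3] ddform_commute[of p \<xi>3 \<xi>2 \<xi>1] ddform_commute[of p \<xi>1 \<xi>3 \<xi>2]
    unfolding curv_deriv_def field_deriv_def curv_eq \<xi>1_def[symmetric] \<xi>2_def[symmetric] \<xi>3_def[symmetric]
    unfolding lie_br_def
    by (simp add: matrix_mult_distribs matrix_mul_assoc algebra_simps)
  then show ?thesis
    unfolding curv_diff_left[symmetric] \<xi>1_def \<xi>2_def \<xi>3_def lfield_bracket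
    by (simp add: algebra_simps)
qed

definition wedge_deriv :: "pt \<Rightarrow> 3 \<Rightarrow> 3 \<Rightarrow> 3 \<Rightarrow> 3 \<Rightarrow> real^3 \<Rightarrow> mat3 \<Rightarrow> real^3 \<Rightarrow> mat3 \<Rightarrow> pt \<Rightarrow> real" where
  "wedge_deriv p i1 j1 i2 j2 vi Yi vj Yj \<zeta> =
     field_deriv p vi Yi \<zeta> $ i1 $ j1 * \<omega> p (lfield vj Yj p) $ i2 $ j2
     + \<omega> p (lfield vi Yi p) $ i1 $ j1 * field_deriv p vj Yj \<zeta> $ i2 $ j2
     - (field_deriv p vj Yj \<zeta> $ i1 $ j1 * \<omega> p (lfield vi Yi p) $ i2 $ j2
        + \<omega> p (lfield vj Yj p) $ i1 $ j1 * field_deriv p vi Yi \<zeta> $ i2 $ j2)"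

lemma has_derivative_wedge_lfield:
  "((\<lambda>q. wedge_ent \<omega> q i1 j1 i2 j2 (lfield vi Yi q) (lfield vj Yj q)) has_derivative
     wedge_deriv p i1 j1 i2 j2 vi Yi vj Yj) (at p)"
proof -
  note Di = has_derivative_matrix_entry[OF has_derivative_form_lfield[of vi Yi p]]
  note Dj = has_derivative_matrix_entry[OF has_derivative_form_lfield[of vj Yj p]]
  have "((\<lambda>q. wedge_ent \<omega> q i1 j1 i2 j2 (lfield vi Yi q) (lfield vj Yj q)) has_derivative
     (\<lambda>\<zeta>. (\<omega> p (lfield vi Yi p) $ i1 $ j1 * field_deriv p vj Yj \<zeta> $ i2 $ j2
          + field_deriv p vi Yi \<zeta> $ i1 $ j1 * \<omega> p (lfield vj Yj p) $ i2 $ j2)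
         - (\<omega> p (lfield vj Yj p) $ i1 $ j1 * field_deriv p vi Yi \<zeta> $ i2 $ j2
          + field_deriv p vj Yj \<zeta> $ i1 $ j1 * \<omega> p (lfield vi Yi p) $ i2 $ j2))) (at p)"
    unfolding wedge_ent_def by (intro has_derivative_diff has_derivative_mult Di Dj)
  then show ?thesis
    unfolding wedge_deriv_def by (simp add: algebra_simps)
qed

text \<open>Near \<open>p\<close>, \<open>e\<close> is the quotient of a curvature entry by the nonvanishing wedge.\<close>
lemma curvature_coefficient_extension:
  fixes e :: "pt \<Rightarrow> real"
  assumes e: "\<And>q \<xi> \<eta>. q \<in> Pset \<Longrightarrow> \<xi> \<in> tangent q \<Longrightarrow> \<eta> \<in> tangent q \<Longrightarrow>
      curv \<omega> q \<xi> \<eta> $ r $ s = e q * wedge_ent \<omega> q i1 j1 i2 j2 \<xi> \<eta>"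
    and Ym: "Ym \<in> gLie" and Yn: "Yn \<in> gLie"
    and w_nz: "wedge_ent \<omega> p i1 j1 i2 j2 (lfield vm Ym p) (lfield vn Yn p) \<noteq> 0"
  obtains e' A where "(e' has_derivative A) (at p)" "\<forall>\<^sub>F q in nhds p. q \<in> Pset \<longrightarrow> e q = e' q"
proof -
  define w where "w = (\<lambda>q. wedge_ent \<omega> q i1 j1 i2 j2 (lfield vm Ym q) (lfield vn Yn q))"
  define h where "h = (\<lambda>q. curv \<omega> q (lfield vm Ym q) (lfield vn Yn q) $ r $ s)"
  have w: "(w has_derivative wedge_deriv p i1 j1 i2 j2 vm Ym vn Yn) (at p)"
    unfolding w_def by (rule has_derivative_wedge_lfield)
  have h: "(h has_derivative (\<lambda>\<zeta>. curv_deriv p vm Ym vn Yn \<zeta> $ r $ s)) (at p)"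
    unfolding h_def by (rule has_derivative_matrix_entry[OF has_derivative_curv_lfield])
  have "w p \<noteq> 0" using w_nz unfolding w_def .
  then obtain A where "((\<lambda>q. h q / w q) has_derivative A) (at p)"
    using has_derivative_divide[OF h w] by blast
  moreover have "\<forall>\<^sub>F q in nhds p. w q \<noteq> 0"
    using \<open>w p \<noteq> 0\<close> has_derivative_continuous[OF w] by (simp add: isCont_def tendsto_imp_eventually_ne
        tendsto_at_iff_tendsto_nhds)
  then have "\<forall>\<^sub>F q in nhds p. q \<in> Pset \<longrightarrow> e q = h q / w q"
    by (rule eventually_mono) (simp add: h_def w_def e lfield_tangent Ym Yn)
  ultimately show ?thesis using that by blast
qed

text \<open>The identity \<open>curv\<^sub>r\<^sub>s = e w\<close> holds on \<open>P\<close>, so both sides have the same derivative along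
  tangent vectors.\<close>
lemma curvature_coefficient_deriv:
  fixes e :: "pt \<Rightarrow> real"
  assumes p: "p \<in> Pset"
    and e: "\<And>q \<xi> \<eta>. q \<in> Pset \<Longrightarrow> \<xi> \<in> tangent q \<Longrightarrow> \<eta> \<in> tangent q \<Longrightarrow>
      curv \<omega> q \<xi> \<eta> $ r $ s = e q * wedge_ent \<omega> q i1 j1 i2 j2 \<xi> \<eta>"
    and Ym: "Ym \<in> gLie" and Yn: "Yn \<in> gLie"
    and w_nz: "wedge_ent \<omega> p i1 j1 i2 j2 (lfield vm Ym p) (lfield vn Yn p) \<noteq> 0"
  obtains A where "(e has_derivative A) (at p within Pset)"
    and "\<And>vi Yi vj Yj \<zeta>. Yi \<in> gLie \<Longrightarrow> Yj \<in> gLie \<Longrightarrow> \<zeta> \<in> tangent p \<Longrightarrow>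
       curv_deriv p vi Yi vj Yj \<zeta> $ r $ s
         = A \<zeta> * wedge_ent \<omega> p i1 j1 i2 j2 (lfield vi Yi p) (lfield vj Yj p)
           + e p * wedge_deriv p i1 j1 i2 j2 vi Yi vj Yj \<zeta>"
proof -
  obtain e' A where e': "(e' has_derivative A) (at p)"
    and near: "\<forall>\<^sub>F q in nhds p. q \<in> Pset \<longrightarrow> e q = e' q"
    using curvature_coefficient_extension[OF e Ym Yn w_nz] by blast
  have "e p = e' p" using eventually_nhds_x_imp_x[OF near] p by blast
  have "(e has_derivative A) (at p within Pset)"
    using near p \<open>e p = e' p\<close>
    by (intro has_derivative_transform_eventually[OF has_derivative_at_withinI[OF e']])
      (auto simp: eventually_at_filter elim: eventually_mono)
  moreover have "curv_deriv p vi Yi vj Yj \<zeta> $ r $ s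
       = A \<zeta> * wedge_ent \<omega> p i1 j1 i2 j2 (lfield vi Yi p) (lfield vj Yj p)
         + e p * wedge_deriv p i1 j1 i2 j2 vi Yi vj Yj \<zeta>"
    if Yi: "Yi \<in> gLie" and Yj: "Yj \<in> gLie" and \<zeta>: "\<zeta> \<in> tangent p" for vi Yi vj Yj \<zeta>
  proof -
    define k where "k = (\<lambda>q. curv \<omega> q (lfield vi Yi q) (lfield vj Yj q) $ r $ s
                       - e' q * wedge_ent \<omega> q i1 j1 i2 j2 (lfield vi Yi q) (lfield vj Yj q))"
    have k: "(k has_derivative (\<lambda>\<zeta>. curv_deriv p vi Yi vj Yj \<zeta> $ r $ s
        - (e' p * wedge_deriv p i1 j1 i2 j2 vi Yi vj Yj \<zeta>
           + A \<zeta> * wedge_ent \<omega> p i1 j1 i2 j2 (lfield vi Yi p) (lfield vj Yj p)))) (at p)"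
      unfolding k_def
      by (intro has_derivative_diff has_derivative_mult has_derivative_matrix_entry
          has_derivative_curv_lfield e' has_derivative_wedge_lfield)
    have "\<forall>\<^sub>F q in nhds p. q \<in> Pset \<longrightarrow> k q = 0"
      using near by (rule eventually_mono) (simp add: k_def e lfield_tangent Yi Yj)
    then have "frechet_derivative k (at p) \<zeta> = 0"
      using k p \<zeta> by (intro frechet_derivative_tangent_eq_0) (auto simp: differentiable_def)
    then show ?thesis
      using \<open>e p = e' p\<close> by (simp add: frechet_derivative_at[OF k, symmetric] algebra_simps)
  qed
  ultimately show ?thesis using that by blast
qed

lemma form_vertical: "q \<in> Pset \<Longrightarrow> Z \<in> gLie \<Longrightarrow> \<omega> q (lfield 0 Z q) = Z"
  using connection unfolding cartan_connection_def Pset_def lfield_def by auto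

lemma lfield_with_form_value:
  assumes "q \<in> Pset" "Z \<in> sl3"
  obtains v Y where "Y \<in> gLie" "\<omega> q (lfield v Y q) = Z"
proof -
  have "\<omega> q ` tangent q = sl3"
    using connection assms unfolding cartan_connection_def bij_betw_def by blast
  then show ?thesis
    using that assms(2) tangent_iff_lfield by (metis imageE)
qed

end

section \<open>Consequences of the normal form of the curvature\<close>

locale normal_cartan = cartan +
  fixes a b c d :: "pt \<Rightarrow> real"
  assumes curvature_form: "curvature_form \<omega> a b c d"
begin

lemma curv_normal:
  assumes "q \<in> Pset" "\<xi> \<in> tangent q" "\<eta> \<in> tangent q"
  shows "curv \<omega> q \<xi> \<eta> =
    (\<chi> i j. if i = 1 \<and> j = 2 then a q * wedge_ent \<omega> q 2 1 3 1 \<xi> \<eta>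
            else if i = 1 \<and> j = 3 then b q * wedge_ent \<omega> q 2 1 3 1 \<xi> \<eta> + c q * wedge_ent \<omega> q 3 1 3 2 \<xi> \<eta>
            else if i = 2 \<and> j = 3 then d q * wedge_ent \<omega> q 3 1 3 2 \<xi> \<eta>
            else 0)"
  using curvature_form assms unfolding curvature_form_def by blast

lemma curv_vertical_eq_0:
  assumes q: "q \<in> Pset" and Z: "Z \<in> gLie" and \<eta>: "\<eta> \<in> tangent q"
  shows "curv \<omega> q (lfield 0 Z q) \<eta> = 0"
  using curv_normal[OF q lfield_tangent[OF Z] \<eta>] form_vertical[OF q Z] gLie_lower_entries[OF Z]
  by (simp add: wedge_ent_def vec_eq_iff)

lemma bianchi:
  fixes v1 v2 v3 :: "real^3"
  assumes p: "p \<in> Pset" and "Y1 \<in> gLie" "Y2 \<in> gLie" "Y3 \<in> gLie"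
  defines "\<xi>1 \<equiv> lfield v1 Y1 p" and "\<xi>2 \<equiv> lfield v2 Y2 p" and "\<xi>3 \<equiv> lfield v3 Y3 p"
  shows "curv_deriv p v1 Y1 v2 Y2 \<xi>3 + curv_deriv p v2 Y2 v3 Y3 \<xi>1 + curv_deriv p v3 Y3 v1 Y1 \<xi>2
   = lie_br (curv \<omega> p \<xi>1 \<xi>2) (\<omega> p \<xi>3) + lie_br (curv \<omega> p \<xi>2 \<xi>3) (\<omega> p \<xi>1)
     + lie_br (curv \<omega> p \<xi>3 \<xi>1) (\<omega> p \<xi>2)"
  using curv_deriv_cyclic[of p v1 Y1 v2 Y2 v3 Y3] assms
  by (simp add: curv_vertical_eq_0 lie_br_gLie lfield_tangent)

text \<open>In the structure equation both \<open>\<Omega>\<close> and \<open>\<omega>([X, Y])\<close> are upper triangular, so the lower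
  entries of \<open>d\<omega>\<close> are those of \<open>-[\<omega>, \<omega>]\<close>.\<close>
lemma field_deriv_skew_lower:
  assumes p: "p \<in> Pset" and Yi: "Yi \<in> gLie" and Yk: "Yk \<in> gLie"
    and rs: "(r = 2 \<and> s = 1) \<or> (r = 3 \<and> s = 1) \<or> (r = 3 \<and> s = 2)"
  shows "(field_deriv p vi Yi (lfield vk Yk p) - field_deriv p vk Yk (lfield vi Yi p)) $ r $ s
    = - lie_br (\<omega> p (lfield vk Yk p)) (\<omega> p (lfield vi Yi p)) $ r $ s"
proof -
  have "curv \<omega> p (lfield vk Yk p) (lfield vi Yi p) $ r $ s = 0"
    using rs unfolding curv_normal[OF p lfield_tangent[OF Yk] lfield_tangent[OF Yi]]
    by (elim disjE) simp_all
  moreover have "lie_br Yk Yi $ r $ s = 0"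
    using rs gLie_lower_entries[OF lie_br_gLie[OF Yk Yi]] by auto
  ultimately show ?thesis
    unfolding structure_equation form_vertical[OF p lie_br_gLie[OF Yk Yi]] by simp
qed

end

locale normal_frame = normal_cartan +
  fixes p :: pt and v1 v2 v3 :: "real^3" and Y1 Y2 Y3 :: mat3
  assumes p: "p \<in> Pset"
    and Y1: "Y1 \<in> gLie" and Y2: "Y2 \<in> gLie" and Y3: "Y3 \<in> gLie"
    and \<omega>1: "\<omega> p (lfield v1 Y1 p) = Emat 2 1"
    and \<omega>2: "\<omega> p (lfield v2 Y2 p) = Emat 3 1"
    and \<omega>3: "\<omega> p (lfield v3 Y3 p) = Emat 3 2"
begin

abbreviation "\<xi>1 \<equiv> lfield v1 Y1 p"
abbreviation "\<xi>2 \<equiv> lfield v2 Y2 p"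
abbreviation "\<xi>3 \<equiv> lfield v3 Y3 p"

lemma tangent_frame: "\<xi>1 \<in> tangent p" "\<xi>2 \<in> tangent p" "\<xi>3 \<in> tangent p"
  using lfield_tangent Y1 Y2 Y3 by auto

lemma bianchi_frame:
  "(curv_deriv p v1 Y1 v2 Y2 \<xi>3 + curv_deriv p v2 Y2 v3 Y3 \<xi>1 + curv_deriv p v3 Y3 v1 Y1 \<xi>2) $ 1 $ 2 = b p"
  "(curv_deriv p v1 Y1 v2 Y2 \<xi>3 + curv_deriv p v2 Y2 v3 Y3 \<xi>1 + curv_deriv p v3 Y3 v1 Y1 \<xi>2) $ 2 $ 3 = - c p"
  unfolding bianchi[OF p Y1 Y2 Y3] curv_normal[OF p tangent_frame(1,2)]
    curv_normal[OF p tangent_frame(2,3)] curv_normal[OF p tangent_frame(3,1)] \<omega>1 \<omega>2 \<omega>3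
  by (simp_all add: lie_br_def matrix_matrix_mult_def Emat_def sum_3 wedge_ent_def \<omega>1 \<omega>2 \<omega>3)

lemma field_deriv_skew_frame:
  "(field_deriv p v1 Y1 \<xi>3 - field_deriv p v3 Y3 \<xi>1) $ 2 $ 1 = 0"
  "(field_deriv p v2 Y2 \<xi>3 - field_deriv p v3 Y3 \<xi>2) $ 3 $ 1 = 0"
  "(field_deriv p v2 Y2 \<xi>1 - field_deriv p v1 Y1 \<xi>2) $ 3 $ 1 = 0"
  "(field_deriv p v3 Y3 \<xi>1 - field_deriv p v1 Y1 \<xi>3) $ 3 $ 2 = 0"
  by (simp_all only: field_deriv_skew_lower p Y1 Y2 Y3 \<omega>1 \<omega>2 \<omega>3 simp_thms)
    (simp_all add: lie_br_def matrix_matrix_mult_def Emat_def sum_3)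

lemma b_eq_derivative_a_frame: "\<exists>A. (a has_derivative A) (at p within Pset) \<and> b p = A \<xi>3"
proof -
  have e: "curv \<omega> q \<xi> \<eta> $ 1 $ 2 = a q * wedge_ent \<omega> q 2 1 3 1 \<xi> \<eta>"
    if "q \<in> Pset" "\<xi> \<in> tangent q" "\<eta> \<in> tangent q" for q \<xi> \<eta>
    unfolding curv_normal[OF that] by simp
  have "wedge_ent \<omega> p 2 1 3 1 \<xi>1 \<xi>2 \<noteq> 0" unfolding wedge_ent_def \<omega>1 \<omega>2 Emat_def by simp
  then obtain A where A: "(a has_derivative A) (at p within Pset)"
    and deriv: "\<And>vi Yi vj Yj \<zeta>. Yi \<in> gLie \<Longrightarrow> Yj \<in> gLie \<Longrightarrow> \<zeta> \<in> tangent p \<Longrightarrow>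
       curv_deriv p vi Yi vj Yj \<zeta> $ 1 $ 2
         = A \<zeta> * wedge_ent \<omega> p 2 1 3 1 (lfield vi Yi p) (lfield vj Yj p)
           + a p * wedge_deriv p 2 1 3 1 vi Yi vj Yj \<zeta>"
    using curvature_coefficient_deriv[OF p e Y1 Y2] by blast
  have "b p = A \<xi>3 + a p * (field_deriv p v1 Y1 \<xi>3 - field_deriv p v3 Y3 \<xi>1) $ 2 $ 1
      + a p * (field_deriv p v2 Y2 \<xi>3 - field_deriv p v3 Y3 \<xi>2) $ 3 $ 1"
    using bianchi_frame(1) deriv[where vi = v1 and vj = v2, OF Y1 Y2 tangent_frame(3)]
      deriv[where vi = v2 and vj = v3, OF Y2 Y3 tangent_frame(1)]
      deriv[where vi = v3 and vj = v1, OF Y3 Y1 tangent_frame(2)]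
    unfolding wedge_deriv_def wedge_ent_def \<omega>1 \<omega>2 \<omega>3
    by (simp add: Emat_def algebra_simps)
  then show ?thesis using field_deriv_skew_frame A by auto
qed

lemma c_eq_neg_derivative_d_frame: "\<exists>A. (d has_derivative A) (at p within Pset) \<and> c p = - A \<xi>1"
proof -
  have e: "curv \<omega> q \<xi> \<eta> $ 2 $ 3 = d q * wedge_ent \<omega> q 3 1 3 2 \<xi> \<eta>"
    if "q \<in> Pset" "\<xi> \<in> tangent q" "\<eta> \<in> tangent q" for q \<xi> \<eta>
    unfolding curv_normal[OF that] by simp
  have "wedge_ent \<omega> p 3 1 3 2 \<xi>2 \<xi>3 \<noteq> 0" unfolding wedge_ent_def \<omega>2 \<omega>3 Emat_def by simp
  then obtain A where A: "(d has_derivative A) (at p within Pset)"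
    and deriv: "\<And>vi Yi vj Yj \<zeta>. Yi \<in> gLie \<Longrightarrow> Yj \<in> gLie \<Longrightarrow> \<zeta> \<in> tangent p \<Longrightarrow>
       curv_deriv p vi Yi vj Yj \<zeta> $ 2 $ 3
         = A \<zeta> * wedge_ent \<omega> p 3 1 3 2 (lfield vi Yi p) (lfield vj Yj p)
           + d p * wedge_deriv p 3 1 3 2 vi Yi vj Yj \<zeta>"
    using curvature_coefficient_deriv[OF p e Y2 Y3] by blast
  have "- c p = A \<xi>1 + d p * (field_deriv p v2 Y2 \<xi>1 - field_deriv p v1 Y1 \<xi>2) $ 3 $ 1
      + d p * (field_deriv p v3 Y3 \<xi>1 - field_deriv p v1 Y1 \<xi>3) $ 3 $ 2"
    using bianchi_frame(2) deriv[where vi = v1 and vj = v2, OF Y1 Y2 tangent_frame(3)]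
      deriv[where vi = v2 and vj = v3, OF Y2 Y3 tangent_frame(1)]
      deriv[where vi = v3 and vj = v1, OF Y3 Y1 tangent_frame(2)]
    unfolding wedge_deriv_def wedge_ent_def \<omega>1 \<omega>2 \<omega>3
    by (simp add: Emat_def algebra_simps)
  then show ?thesis using field_deriv_skew_frame A by auto
qed

end

context normal_cartan
begin

lemma b_eq_derivative_a:
  assumes p: "p \<in> Pset" and \<xi>: "\<xi> \<in> tangent p" "\<omega> p \<xi> = Emat 3 2"
  shows "\<exists>A. (a has_derivative A) (at p within Pset) \<and> b p = A \<xi>"
proof -
  obtain v1 Y1 where 1: "Y1 \<in> gLie" "\<omega> p (lfield v1 Y1 p) = Emat 2 1"
    by (rule lfield_with_form_value[OF p Emat_sl3]) auto
  obtain v2 Y2 where 2: "Y2 \<in> gLie" "\<omega> p (lfield v2 Y2 p) = Emat 3 1"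
    by (rule lfield_with_form_value[OF p Emat_sl3]) auto
  obtain v3 Y3 where 3: "Y3 \<in> gLie" "\<xi> = lfield v3 Y3 p"
    using \<xi> tangent_iff_lfield by blast
  interpret normal_frame \<omega> a b c d p v1 v2 v3 Y1 Y2 Y3
    using p 1 2 3 \<xi> by unfold_locales auto
  show ?thesis using b_eq_derivative_a_frame 3 by simp
qed

lemma c_eq_neg_derivative_d:
  assumes p: "p \<in> Pset" and \<xi>: "\<xi> \<in> tangent p" "\<omega> p \<xi> = Emat 2 1"
  shows "\<exists>A. (d has_derivative A) (at p within Pset) \<and> c p = - A \<xi>"
proof -
  obtain v1 Y1 where 1: "Y1 \<in> gLie" "\<xi> = lfield v1 Y1 p"
    using \<xi> tangent_iff_lfield by blast
  obtain v2 Y2 where 2: "Y2 \<in> gLie" "\<omega> p (lfield v2 Y2 p) = Emat 3 1"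
    by (rule lfield_with_form_value[OF p Emat_sl3]) auto
  obtain v3 Y3 where 3: "Y3 \<in> gLie" "\<omega> p (lfield v3 Y3 p) = Emat 3 2"
    by (rule lfield_with_form_value[OF p Emat_sl3]) auto
  interpret normal_frame \<omega> a b c d p v1 v2 v3 Y1 Y2 Y3
    using p 1 2 3 \<xi> by unfold_locales auto
  show ?thesis using c_eq_neg_derivative_d_frame 1 by simp
qed

end

text \<open>Only the normal form of the curvature enters.\<close>
theorem lemma6p1:
  fixes E1 E2 :: "real^3 \<Rightarrow> (real^3) set"
    and \<omega> :: "pt \<Rightarrow> pt \<Rightarrow> mat3"
    and a b c d :: "pt \<Rightarrow> real"
  assumes "nondegenerate_pair E1 E2"
    and "cartan_connection \<omega>"
    and "adapted \<omega> E1 E2"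
    and "curvature_form \<omega> a b c d"
  shows "\<forall>p\<in>Pset.
           (\<forall>\<xi>\<in>tangent p. \<omega> p \<xi> = Emat 3 2 \<longrightarrow>
              (\<exists>A. (a has_derivative A) (at p within Pset) \<and> b p = A \<xi>)) \<and>
           (\<forall>\<xi>\<in>tangent p. \<omega> p \<xi> = Emat 2 1 \<longrightarrow>
              (\<exists>A. (d has_derivative A) (at p within Pset) \<and> c p = - A \<xi>))"
proof -
  interpret normal_cartan \<omega> a b c d
    using assms(2,4) by unfold_locales
  show ?thesis
    using b_eq_derivative_a c_eq_neg_derivative_d by blast
qed

end
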